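(* Fix $n\ge 1$. List all periodic canonical increment arrays over all coalition sizes $s=1,\ldots,n$ in some fixed order as $\underline{t}^{(1)},\ldots,\underline{t}^{(M)}$, where $M=\sum_{s=1}^{n}|\mathcal{P}(n,s)|$. For $\underline{t}^{(j)}$ of size $s_j$ let $d^{(j)}=n\,\pi(\underline{t}^{(j)})/s_j$, and let $H_1=0$, $H_j=\sum_{i=1}^{j-1}d^{(i)}$. Say agent $x\in\{1,\ldots,n\}$ is designated for $\underline{t}^{(j)}$ iff $(x-1-H_j)\bmod n<d^{(j)}$ (with $\bmod$ taking values in $\{0,\ldots,n-1\}$). Define the total allocation of agent $x$ as \[CV_x=\bigcup_{s=1}^{n}\{C(x,\underline{t}):\underline{t}\in\mathcal{A}(n,s)\}\;\cup\;\{C(x,\underline{t}^{(j)}):1\le j\le M,\ x\text{ designated for }\underline{t}^{(j)}\}.\] Then for every agent $x\in\{1,\ldots,n\}$, \[\left\lfloor\frac{2^n-1}{n}\right\rfloor\le|CV_x|\le\left\lceil\frac{2^n-1}{n}\right\rceil,\] so the total numbers of coalitions allocated to any two agents differ by at most one.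
   Context: Agent identifiers are $\{1,\ldots,n\}$, arithmetic on identifiers is modulo $n$ with representatives in $\{1,\ldots,n\}$ (a value $0$ is replaced by $n$). An increment array (IA) of size $s$ ($1\le s\le n$) for $n$ agents is a tuple $\underline{t}=\langle t_0,\ldots,t_{s-1}\rangle$ of non-negative integers with $\sum t_i=n-s$. Cumulative increments: $\varphi_1=0$, $\varphi_i=\sum_{k=0}^{i-2}(t_k+1)$ for $2\le i\le s+1$. The coalition generated from $x$ is $C(x,\underline{t})=\{x\}\cup\bigcup_{i=2}^{s}\{(x+\varphi_i)\bmod n\}$ (residues in $\{1,\ldots,n\}$). Two IAs of the same size are equivalent ($\approx$) if one is a circular shift of the other; the canonical representative of an equivalence class is its lexicographically smallest member. $\mathcal{E}(n,s)$ is the set of canonical representatives of IAs of size $s$. The period $\pi(\underline{t})$ is the least $p\in\{1,\ldots,s\}$ such that $\underline{t}$ consists of $s/p$ identical consecutive copies of its first $p$ entries. $\mathcal{A}(n,s)=\{\underline{t}\in\mathcal{E}(n,s):\pi(\underline{t})=s\}$ (aperiodic) and $\mathcal{P}(n,s)=\{\underline{t}\in\mathcal{E}(n,s):\pi(\underline{t})<s\}$ (periodic). *)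

theory Defs
  imports Complex_Main
begin

definition modn :: "nat \<Rightarrow> nat \<Rightarrow> nat" where
  "modn n a = (if a mod n = 0 then n else a mod n)"

definition is_IA :: "nat \<Rightarrow> nat \<Rightarrow> nat list \<Rightarrow> bool" where
  "is_IA n s t \<longleftrightarrow> 1 \<le> s \<and> s \<le> n \<and> length t = s \<and> sum_list t = n - s"

definition phi :: "nat list \<Rightarrow> nat \<Rightarrow> nat" where
  "phi t i = (\<Sum>k<i - 1. t ! k + 1)"

definition coalition :: "nat \<Rightarrow> nat \<Rightarrow> nat list \<Rightarrow> nat set" where
  "coalition n x t = {x} \<union> (\<Union>i\<in>{2..length t}. {modn n (x + phi t i)})"

text \<open>Canonical representatives: lexicographically smallest among all circular shifts.\<close>
definition Eset :: "nat \<Rightarrow> nat \<Rightarrow> nat list set" where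
  "Eset n s = {t. is_IA n s t \<and> (\<forall>k. lexordp_eq t (rotate k t))}"

definition period :: "nat list \<Rightarrow> nat" where
  "period t = (LEAST p. p \<in> {1..length t} \<and> p dvd length t \<and>
                 t = concat (replicate (length t div p) (take p t)))"

definition Aset :: "nat \<Rightarrow> nat \<Rightarrow> nat list set" where
  "Aset n s = {t \<in> Eset n s. period t = s}"

definition Pset :: "nat \<Rightarrow> nat \<Rightarrow> nat list set" where
  "Pset n s = {t \<in> Eset n s. period t < s}"

definition dval :: "nat \<Rightarrow> nat list \<Rightarrow> nat" where
  "dval n t = n * period t div length t"

text \<open>H_j (0-indexed j): sum of d over the earlier entries of the list L.\<close>
definition Hval :: "nat \<Rightarrow> nat list list \<Rightarrow> nat \<Rightarrow> nat" where
  "Hval n L j = (\<Sum>i<j. dval n (L ! i))"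

definition designated :: "nat \<Rightarrow> nat list list \<Rightarrow> nat \<Rightarrow> nat \<Rightarrow> bool" where
  "designated n L x j \<longleftrightarrow>
     (int x - 1 - int (Hval n L j)) mod int n < int (dval n (L ! j))"

definition CV :: "nat \<Rightarrow> nat list list \<Rightarrow> nat \<Rightarrow> nat set set" where
  "CV n L x = (\<Union>s\<in>{1..n}. coalition n x ` Aset n s) \<union>
              {coalition n x (L ! j) | j. j < length L \<and> designated n L x j}"

end

theory Submission
  imports Defs "HOL-Combinatorics.Orbits"
begin

(* Rotation permutes the (n - 1 choose s - 1) increment arrays of size s, and the orbit of a
   canonical representative t has period t elements. As d(t) * s = n * period t, summing d over
   E(n,s) gives n choose s, so n |A(n,s)| + (sum of d over P(n,s)) = n choose s; summing over s,
   2^n - 1 = n |A| + D with D the total of all d^(j).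
   For a fixed agent x, distinct arrays give distinct coalitions C(x,t), so |CV_x| is |A| plus
   the number of j for which x is designated. The blocks [H_j, H_j + d^(j)) tile [0, D) and have
   length at most n, so x is designated for t^(j) iff its block contains a number congruent to
   x - 1 mod n; below D there are floor(D/n) or floor(D/n) + 1 such numbers. *)

section \<open>Rotations and periods of lists\<close>

lemma append_commute_iff_concat_replicate:
  assumes "length w = k * length u"
  shows "w @ u = u @ w \<longleftrightarrow> w = concat (replicate k u)"
  using assms
proof (induction k arbitrary: w)
  case 0
  then show ?case by simp
next
  case (Suc k)
  show ?case
  proof
    assume comm: "w @ u = u @ w"
    define w' where "w' = drop (length u) w"
    have "take (length u) w = u"
      using arg_cong[OF comm, of "take (length u)"] Suc.prems by simp
    then have w: "w = u @ w'"
      unfolding w'_def by (metis append_take_drop_id)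
    then have "w' @ u = u @ w'"
      using comm by simp
    moreover have "length w' = k * length u"
      using Suc.prems w by simp
    ultimately show "w = concat (replicate (Suc k) u)"
      using Suc.IH w by simp
  next
    assume w: "w = concat (replicate (Suc k) u)"
    have "concat (replicate k u) @ u = u @ concat (replicate k u)"
      using Suc.IH[of "concat (replicate k u)"] by (simp add: length_concat sum_list_replicate)
    then show "w @ u = u @ w"
      using w by simp
  qed
qed

lemma rotate_eq_drop_take:
  assumes "p \<le> length xs"
  shows "rotate p xs = drop p xs @ take p xs"
  using assms by (cases "p = length xs") (simp_all add: rotate_drop_take)

lemma concat_replicate_take_iff_rotate:
  assumes "xs \<noteq> []" "0 < p" "p dvd length xs"
  shows "xs = concat (replicate (length xs div p) (take p xs)) \<longleftrightarrow> rotate p xs = xs"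
proof -
  define u w where "u = take p xs" and "w = drop p xs"
  obtain q where q: "length xs = Suc q * p"
    using assms by (metis dvdE length_0_conv mult.commute mult_0_right not0_implies_Suc)
  have "length w = q * length u"
    using q unfolding u_def w_def by simp
  moreover have "xs = u @ w" "rotate p xs = w @ u"
    using q unfolding u_def w_def by (simp_all add: rotate_eq_drop_take)
  moreover have "length xs div p = Suc q"
    using q assms by simp
  ultimately show ?thesis
    using append_commute_iff_concat_replicate[of w q u] unfolding u_def[symmetric] by auto
qed

lemma self_in_orbit_rotate1: "xs \<in> orbit rotate1 xs"
proof (cases "xs = []")
  case True
  then show ?thesis using orbit.base[of rotate1 xs] by simp
next
  case False
  then have "(rotate1 ^^ length xs) xs = xs"
    by (simp flip: rotate_def)
  then show ?thesis
    using False unfolding orbit_altdef by (metis (mono_tags) length_greater_0_conv mem_Collect_eq)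
qed

lemma orbit_rotate1_eq_range: "orbit rotate1 xs = range (\<lambda>k. rotate k xs)"
  by (auto simp: orbit_altdef_self_in[OF self_in_orbit_rotate1] rotate_def)

lemma orbit_rotate1_eqI:
  assumes "ys \<in> orbit rotate1 xs"
  shows "orbit rotate1 ys = orbit rotate1 xs"
  using assms orbit_swap[OF self_in_orbit_rotate1 assms] by (blast intro: orbit_trans)

text \<open>The least \<open>k > 0\<close> with \<open>rotate k xs = xs\<close>.\<close>

definition rotation_period :: "'a list \<Rightarrow> nat" where
  "rotation_period xs = funpow_dist1 rotate1 xs xs"

lemma rotate_rotation_period: "rotate (rotation_period xs) xs = xs"
  using funpow_dist1_prop[OF self_in_orbit_rotate1]
  unfolding rotation_period_def rotate_def by blast

lemma rotation_period_le:
  assumes "0 < q" "rotate q xs = xs"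
  shows "rotation_period xs \<le> q"
  using funpow_dist1_le_self[OF _ assms(1) self_in_orbit_rotate1] assms(2)
  unfolding rotation_period_def rotate_def by blast

lemma rotation_period_dvd_length: "rotation_period xs dvd length xs"
proof -
  let ?r = "rotation_period xs"
  have "rotate (length xs mod ?r) xs = rotate (length xs) xs"
    using funpow_mod_eq[where f = rotate1, OF rotate_rotation_period[unfolded rotate_def]]
    by (simp add: rotate_def)
  then have "rotate (length xs mod ?r) xs = xs"
    by simp
  then have "length xs mod ?r = 0"
    using funpow_dist1_least[of "length xs mod ?r" rotate1 xs xs]
    unfolding rotation_period_def rotate_def by (meson mod_less_divisor neq0_conv zero_less_Suc)
  then show ?thesis by auto
qed

lemma period_eq_rotation_period:
  assumes "xs \<noteq> []"
  shows "period xs = rotation_period xs"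
  unfolding period_def
proof (rule Least_equality)
  let ?r = "rotation_period xs"
  have "0 < ?r" "?r \<le> length xs"
    using rotation_period_dvd_length[of xs] assms by (auto simp: dvd_imp_le rotation_period_def)
  then show "?r \<in> {1..length xs} \<and> ?r dvd length xs \<and> xs = concat (replicate (length xs div ?r) (take ?r xs))"
    using assms rotation_period_dvd_length rotate_rotation_period concat_replicate_take_iff_rotate by auto
next
  fix p
  assume p: "p \<in> {1..length xs} \<and> p dvd length xs \<and> xs = concat (replicate (length xs div p) (take p xs))"
  then have "0 < p" "rotate p xs = xs"
    using assms concat_replicate_take_iff_rotate[of xs p] by simp_all
  then show "rotation_period xs \<le> p"
    by (rule rotation_period_le)
qed

lemma
  assumes "xs \<noteq> []"
  shows period_dvd_length: "period xs dvd length xs"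
    and period_le_length: "period xs \<le> length xs"
    and concat_replicate_period: "xs = concat (replicate (length xs div period xs) (take (period xs) xs))"
proof -
  show dvd: "period xs dvd length xs"
    using rotation_period_dvd_length period_eq_rotation_period[OF assms] by simp
  then show "period xs \<le> length xs"
    using assms by (simp add: dvd_imp_le)
  have "0 < period xs"
    using period_eq_rotation_period[OF assms] by (simp add: rotation_period_def)
  then show "xs = concat (replicate (length xs div period xs) (take (period xs) xs))"
    using concat_replicate_take_iff_rotate[OF assms _ dvd] rotate_rotation_period
      period_eq_rotation_period[OF assms] by simp
qed

lemma card_orbit_rotate1:
  assumes "xs \<noteq> []"
  shows "card (orbit rotate1 xs) = period xs"
  unfolding orbit_conv_funpow_dist1[OF self_in_orbit_rotate1]
    card_image[OF inj_on_funpow_dist1[OF self_in_orbit_rotate1]]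
  by (simp add: period_eq_rotation_period[OF assms] rotation_period_def)

section \<open>Necklaces of increment arrays\<close>

lemma sum_list_rotate: "sum_list (rotate k xs) = sum_list (xs :: 'a :: comm_monoid_add list)"
proof -
  have "sum_list xs = sum_list (take m xs) + sum_list (drop m xs)" for m
    by (metis append_take_drop_id sum_list_append)
  then show ?thesis
    by (simp add: rotate_drop_take add.commute)
qed

lemma is_IA_rotate: "is_IA n s t \<Longrightarrow> is_IA n s (rotate k t)"
  unfolding is_IA_def by (simp add: sum_list_rotate)

lemma is_IA_nonempty: "is_IA n s t \<Longrightarrow> t \<noteq> []"
  unfolding is_IA_def by auto

lemma IA_eq_UN_orbit: "{t. is_IA n s t} = (\<Union>t\<in>Eset n s. orbit rotate1 t)"
proof (intro equalityI subsetI)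
  fix u
  assume "u \<in> {t. is_IA n s t}"
  then have u: "is_IA n s u" by simp
  define m where "m = linorder.Min lexordp_eq (orbit rotate1 u)"
  have fin: "finite (orbit rotate1 u)" "orbit rotate1 u \<noteq> {}"
    using finite_orbit[OF self_in_orbit_rotate1] self_in_orbit_rotate1[of u] by auto
  have m_in: "m \<in> orbit rotate1 u"
    unfolding m_def using linorder.Min_in[OF lexordp_linorder fin] .
  then have orbit_m: "orbit rotate1 m = orbit rotate1 u"
    by (rule orbit_rotate1_eqI)
  have "lexordp_eq m (rotate k m)" for k
  proof -
    have "rotate k m \<in> orbit rotate1 m"
      unfolding orbit_rotate1_eq_range by simp
    then have "rotate k m \<in> orbit rotate1 u"
      by (simp only: orbit_m)
    then show ?thesis
      unfolding m_def by (rule linorder.Min_le[OF lexordp_linorder fin(1)])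
  qed
  moreover have "is_IA n s m"
    using m_in u is_IA_rotate unfolding orbit_rotate1_eq_range by auto
  ultimately have "m \<in> Eset n s"
    unfolding Eset_def by simp
  moreover have "u \<in> orbit rotate1 m"
    using orbit_m self_in_orbit_rotate1 by simp
  ultimately show "u \<in> (\<Union>t\<in>Eset n s. orbit rotate1 t)" by blast
next
  fix u
  assume "u \<in> (\<Union>t\<in>Eset n s. orbit rotate1 t)"
  then show "u \<in> {t. is_IA n s t}"
    unfolding Eset_def orbit_rotate1_eq_range by (auto intro: is_IA_rotate)
qed

lemma orbit_rotate1_disjoint:
  assumes "t \<in> Eset n s" "t' \<in> Eset n s" "t \<noteq> t'"
  shows "orbit rotate1 t \<inter> orbit rotate1 t' = {}"
proof (rule ccontr)
  assume "orbit rotate1 t \<inter> orbit rotate1 t' \<noteq> {}"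
  then obtain u where "u \<in> orbit rotate1 t" "u \<in> orbit rotate1 t'"
    by blast
  then have "orbit rotate1 t = orbit rotate1 t'"
    by (metis orbit_rotate1_eqI)
  then have "t' \<in> range (\<lambda>k. rotate k t)" "t \<in> range (\<lambda>k. rotate k t')"
    using self_in_orbit_rotate1[of t] self_in_orbit_rotate1[of t']
    unfolding orbit_rotate1_eq_range by simp_all
  then obtain k k' where rot: "rotate k t = t'" "rotate k' t' = t"
    by (metis rangeE)
  have "lexordp_eq t (rotate k t)" "lexordp_eq t' (rotate k' t')"
    using assms(1,2) unfolding Eset_def by auto
  then have "lexordp_eq t t'" "lexordp_eq t' t"
    unfolding rot .
  then show False
    using assms(3) lexordp_eq_antisym by blast
qed

lemma card_IA:
  assumes "1 \<le> s" "s \<le> n"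
  shows "card {t. is_IA n s t} = (n - 1) choose (s - 1)"
proof -
  have "{t. is_IA n s t} = {t. length t = s \<and> sum_list t = n - s}"
    using assms unfolding is_IA_def by auto
  then have "card {t. is_IA n s t} = (n - 1) choose (n - s)"
    using assms by (simp add: card_length_sum_list)
  also have "\<dots> = (n - 1) choose (s - 1)"
    using assms binomial_symmetric[of "s - 1" "n - 1"] by simp
  finally show ?thesis .
qed

lemma finite_Eset:
  assumes "1 \<le> s" "s \<le> n"
  shows "finite (Eset n s)"
proof -
  have "finite {t. is_IA n s t}"
    using card_IA[OF assms] assms by (metis card_ge_0_finite zero_less_binomial_iff diff_le_mono)
  then show ?thesis
    by (rule rev_finite_subset) (auto simp: Eset_def)
qed

lemma sum_period_Eset:
  assumes "1 \<le> s" "s \<le> n"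
  shows "(\<Sum>t\<in>Eset n s. period t) = (n - 1) choose (s - 1)"
proof -
  have "(\<Sum>t\<in>Eset n s. period t) = (\<Sum>t\<in>Eset n s. card (orbit rotate1 t))"
    by (intro sum.cong refl) (auto simp: Eset_def card_orbit_rotate1 dest: is_IA_nonempty)
  also have "\<dots> = card (\<Union>t\<in>Eset n s. orbit rotate1 t)"
    using finite_Eset[OF assms] finite_orbit[OF self_in_orbit_rotate1] orbit_rotate1_disjoint
    by (intro card_UN_disjoint[symmetric]) auto
  finally show ?thesis
    using IA_eq_UN_orbit card_IA[OF assms] by simp
qed

lemma dval_mult_length:
  assumes "is_IA n s t"
  shows "dval n t * s = n * period t"
proof -
  define p c where "p = period t" and "c = sum_list (take p t)"
  have t: "t \<noteq> []" "length t = s" "sum_list t = n - s" "s \<le> n"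
    using assms unfolding is_IA_def by auto
  have "p dvd s"
    using period_dvd_length[OF t(1)] t(2) unfolding p_def by simp
  then obtain q where s: "s = q * p" by (metis dvd_div_mult_self)
  have "0 < p"
    using t(1,2) \<open>p dvd s\<close> s by (cases p) auto
  then have "t = concat (replicate q (take p t))"
    using concat_replicate_period[OF t(1)] t(2) s unfolding p_def by simp
  moreover have "sum_list (concat (replicate k u)) = k * sum_list u" for k and u :: "nat list"
    by (induction k) auto
  ultimately have "n - s = q * c"
    using t(3) unfolding c_def by metis
  then have "n = q * (c + p)"
    using t(4) s by (simp add: algebra_simps)
  then have "n * p = s * (c + p)"
    using s by (simp add: ac_simps)
  then show ?thesis
    using t(1,2) unfolding dval_def p_def by simp
qed

lemma sum_dval_Eset:
  assumes "1 \<le> s" "s \<le> n"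
  shows "(\<Sum>t\<in>Eset n s. dval n t) = n choose s"
proof -
  have "(\<Sum>t\<in>Eset n s. dval n t) * s = (\<Sum>t\<in>Eset n s. n * period t)"
    unfolding sum_distrib_right by (intro sum.cong refl) (auto simp: Eset_def dval_mult_length)
  also have "\<dots> = s * (n choose s)"
    using assms by (simp add: sum_period_Eset times_binomial_minus1_eq flip: sum_distrib_left)
  finally show ?thesis
    using assms by simp
qed

lemma Pset_IA: "t \<in> Pset n s \<Longrightarrow> is_IA n s t"
  and Aset_IA: "t \<in> Aset n s \<Longrightarrow> is_IA n s t"
  unfolding Pset_def Aset_def Eset_def by simp_all

lemma Aset_period: "t \<in> Aset n s \<Longrightarrow> period t = length t"
  and Pset_period: "t \<in> Pset n s \<Longrightarrow> period t < length t"
  unfolding Aset_def Pset_def Eset_def is_IA_def by auto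

lemma Aset_disjoint: "s \<noteq> s' \<Longrightarrow> Aset n s \<inter> Aset n s' = {}"
  and Pset_disjoint: "s \<noteq> s' \<Longrightarrow> Pset n s \<inter> Pset n s' = {}"
  using Aset_IA Pset_IA unfolding is_IA_def by blast+

lemma dval_le:
  assumes "t \<noteq> []"
  shows "dval n t \<le> n"
proof -
  have "n * period t div length t \<le> n * length t div length t"
    using period_le_length[OF assms] by (intro div_le_mono mult_le_mono2)
  then show ?thesis
    unfolding dval_def using assms by simp
qed

lemma Eset_eq_Aset_Un_Pset: "Eset n s = Aset n s \<union> Pset n s"
  using period_le_length is_IA_nonempty unfolding Aset_def Pset_def Eset_def is_IA_def
  by (auto simp: order.order_iff_strict)

lemma dval_Aset: "t \<in> Aset n s \<Longrightarrow> dval n t = n"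
  unfolding Aset_def Eset_def is_IA_def dval_def by auto

lemma n_card_Aset_add_sum_dval_Pset:
  assumes "1 \<le> s" "s \<le> n"
  shows "n * card (Aset n s) + (\<Sum>t\<in>Pset n s. dval n t) = n choose s"
proof -
  have "finite (Aset n s)" "finite (Pset n s)" "Aset n s \<inter> Pset n s = {}"
    using finite_Eset[OF assms] unfolding Aset_def Pset_def by auto
  then have "(\<Sum>t\<in>Eset n s. dval n t) = (\<Sum>t\<in>Aset n s. dval n t) + (\<Sum>t\<in>Pset n s. dval n t)"
    unfolding Eset_eq_Aset_Un_Pset by (rule sum.union_disjoint)
  then show ?thesis
    using sum_dval_Eset[OF assms] by (simp add: dval_Aset)
qed

section \<open>A coalition determines its increment array\<close>

lemma phi_Suc_Suc: "phi t (Suc (Suc k)) = phi t (Suc k) + t ! k + 1"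
  unfolding phi_def by simp

lemma phi_less:
  assumes "1 \<le> i" "i < j"
  shows "phi t i < phi t j"
proof -
  have "phi t (Suc k) < phi t (Suc (Suc k))" for k
    by (simp add: phi_Suc_Suc)
  then have "phi t (Suc (i - 1)) < phi t (Suc (j - 1))"
    by (rule lift_Suc_mono_less) (use assms in linarith)
  then show ?thesis
    using assms by (simp add: Suc_pred')
qed

lemma phi_IA_last:
  assumes "is_IA n s t"
  shows "phi t (Suc s) = n"
proof -
  have "phi t (Suc s) = (\<Sum>k<s. t ! k) + s"
    unfolding phi_def diff_Suc_1 sum.distrib by simp
  also have "(\<Sum>k<s. t ! k) = sum_list t"
    using assms unfolding is_IA_def by (simp add: sum_list_sum_nth atLeast0LessThan)
  finally show ?thesis
    using assms unfolding is_IA_def by simp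
qed

lemma IA_eq_if_phi_image_eq:
  assumes "is_IA n s t" "is_IA n s' t'" "phi t ` {1..s} = phi t' ` {1..s'}"
  shows "t = t'"
proof -
  have sorted: "sorted_wrt (<) (map (phi u) [1..<Suc m])" for u m
    unfolding sorted_wrt_map by (rule sorted_wrt_mono_rel[OF _ sorted_wrt_upt]) (auto intro!: phi_less)
  have "set (map (phi u) [1..<Suc m]) = phi u ` {1..m}" for u m
    by auto
  then have lists: "map (phi t) [1..<Suc s] = map (phi t') [1..<Suc s']"
    using assms(3) by (intro strict_sorted_equal[OF sorted sorted]) simp
  then have "s = s'"
    by (metis length_map length_upt diff_Suc_1)
  have phi_eq: "phi t (Suc i) = phi t' (Suc i)" if "i \<le> s" for i
  proof (cases "i = s")
    case True
    then show ?thesis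
      using phi_IA_last assms(1,2) \<open>s = s'\<close> by simp
  next
    case False
    have "map (phi t) [1..<Suc s] ! i = map (phi t') [1..<Suc s] ! i"
      using lists unfolding \<open>s = s'\<close> by (rule arg_cong)
    then show ?thesis
      using that False by (simp del: upt_Suc)
  qed
  show ?thesis
  proof (rule nth_equalityI)
    show "length t = length t'"
      using assms(1,2) \<open>s = s'\<close> unfolding is_IA_def by simp
    fix k
    assume "k < length t"
    then have "k < s"
      using assms(1) unfolding is_IA_def by simp
    then show "t ! k = t' ! k"
      using phi_eq[of k] phi_eq[of "Suc k"] phi_Suc_Suc[of t k] phi_Suc_Suc[of t' k] by simp
  qed
qed

lemma modn_shift:
  assumes "x \<in> {1..n}" "d < n"
  shows "(modn n (x + d) + (n - x)) mod n = d"
proof -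
  have "modn n a mod n = a mod n" for a
    unfolding modn_def by auto
  then have "(modn n (x + d) + (n - x)) mod n = (x + d + (n - x)) mod n"
    by (metis mod_add_left_eq)
  also have "x + d + (n - x) = d + n"
    using assms by simp
  finally show ?thesis
    using assms by simp
qed

lemma coalition_shift:
  assumes "x \<in> {1..n}" "is_IA n s t"
  shows "(\<lambda>y. (y + (n - x)) mod n) ` coalition n x t = phi t ` {1..s}"
proof -
  have s: "length t = s" "1 \<le> s"
    using assms unfolding is_IA_def by auto
  have "modn n x = x"
    using assms(1) unfolding modn_def by (cases "x = n") auto
  moreover have "phi t 1 = 0"
    unfolding phi_def by simp
  moreover have "{1..s} = insert 1 {2..s}"
    using s by auto
  ultimately have "coalition n x t = (\<lambda>i. modn n (x + phi t i)) ` {1..s}"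
    using s unfolding coalition_def by auto
  then have "(\<lambda>y. (y + (n - x)) mod n) ` coalition n x t
      = (\<lambda>i. (modn n (x + phi t i) + (n - x)) mod n) ` {1..s}"
    by (simp add: image_image)
  also have "\<dots> = phi t ` {1..s}"
  proof (rule image_cong[OF refl])
    fix i
    assume "i \<in> {1..s}"
    then have "phi t i < n"
      using phi_less[of i "Suc s" t] phi_IA_last[OF assms(2)] by simp
    then show "(modn n (x + phi t i) + (n - x)) mod n = phi t i"
      by (rule modn_shift[OF assms(1)])
  qed
  finally show ?thesis .
qed

lemma coalition_inj:
  assumes "x \<in> {1..n}" "is_IA n s t" "is_IA n s' t'" "coalition n x t = coalition n x t'"
  shows "t = t'"
  using IA_eq_if_phi_image_eq[OF assms(2,3)] coalition_shift[OF assms(1,2)]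
    coalition_shift[OF assms(1,3)] assms(4) by simp

section \<open>Counting designated agents\<close>

lemma add_mod_eq_iff:
  fixes a i n y :: nat
  assumes "i < n" "y < n"
  shows "(a + i) mod n = y \<longleftrightarrow> int i = (int y - int a) mod int n"
proof -
  have "(a + i) mod n = y \<longleftrightarrow> (int a + int i) mod int n = int y mod int n"
    using assms(2) by (metis of_nat_add of_nat_eq_iff mod_less zmod_int)
  also have "\<dots> \<longleftrightarrow> int i mod int n = (int y - int a) mod int n"
    by (simp add: mod_eq_dvd_iff algebra_simps)
  also have "\<dots> \<longleftrightarrow> int i = (int y - int a) mod int n"
    using assms(1) by simp
  finally show ?thesis .
qed

lemma card_interval_mod_eq:
  fixes a d n y :: nat
  assumes "y < n" "d \<le> n"
  shows "card {k. a \<le> k \<and> k < a + d \<and> k mod n = y} = (if (int y - int a) mod int n < int d then 1 else 0)"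
proof -
  define r where "r = nat ((int y - int a) mod int n)"
  have r: "int r = (int y - int a) mod int n"
    using assms(1) unfolding r_def by simp
  have "{k. a \<le> k \<and> k < a + d \<and> k mod n = y} = (\<lambda>i. a + i) ` {i. i < d \<and> (a + i) mod n = y}"
  proof (intro set_eqI iffI)
    fix k
    assume "k \<in> {k. a \<le> k \<and> k < a + d \<and> k mod n = y}"
    then show "k \<in> (\<lambda>i. a + i) ` {i. i < d \<and> (a + i) mod n = y}"
      by (intro image_eqI[of _ _ "k - a"]) auto
  qed auto
  also have "{i. i < d \<and> (a + i) mod n = y} = {i. i < d \<and> i = r}"
  proof (intro Collect_cong conj_cong refl)
    fix i
    assume "i < d"
    then show "(a + i) mod n = y \<longleftrightarrow> i = r"
      using add_mod_eq_iff[of i n y a] assms r by auto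
  qed
  finally have "card {k. a \<le> k \<and> k < a + d \<and> k mod n = y} = card {i. i < d \<and> i = r}"
    by (simp add: card_image)
  also have "\<dots> = (if r < d then 1 else 0)"
    by (auto simp: Collect_conj_eq)
  finally show ?thesis
    using r by (metis of_nat_less_iff)
qed

lemma card_mod_eq_less:
  fixes D n y :: nat
  assumes "y < n"
  shows "card {k. k < D \<and> k mod n = y} = D div n + (if y < D mod n then 1 else 0)"
proof (induction D)
  case 0
  then show ?case by simp
next
  case (Suc D)
  have "{k. k < Suc D \<and> k mod n = y} = {k. k < D \<and> k mod n = y} \<union> (if D mod n = y then {D} else {})"
    by (auto simp: less_Suc_eq)
  then have "card {k. k < Suc D \<and> k mod n = y} = card {k. k < D \<and> k mod n = y} + (if D mod n = y then 1 else 0)"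
    by (auto simp: card_insert_if)
  also have "\<dots> = Suc D div n + (if y < Suc D mod n then 1 else 0)"
    using Suc.IH assms by (cases "Suc (D mod n) = n") (auto simp: div_Suc mod_Suc)
  finally show ?case .
qed

text \<open>With \<open>H_j = (\<Sum>i<j. d i)\<close>, the blocks \<open>[H_j, H_j + d j)\<close> tile \<open>[0, H_M)\<close>; being at
  most \<open>n\<close> long, each contains at most one number congruent to \<open>y\<close>, and it does so exactly
  when \<open>j\<close> is counted.\<close>

lemma card_designated_eq_card_mod:
  fixes d :: "nat \<Rightarrow> nat" and y n M :: nat
  assumes "y < n" "\<And>j. j < M \<Longrightarrow> d j \<le> n"
  shows "card {j. j < M \<and> (int y - int (\<Sum>i<j. d i)) mod int n < int (d j)} =
         card {k. k < (\<Sum>i<M. d i) \<and> k mod n = y}"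
  using assms(2)
proof (induction M)
  case 0
  then show ?case by simp
next
  case (Suc M)
  define H where "H = (\<Sum>i<M. d i)"
  define hit where "hit j \<longleftrightarrow> (int y - int (\<Sum>i<j. d i)) mod int n < int (d j)" for j
  have "{j. j < Suc M \<and> hit j} = {j. j < M \<and> hit j} \<union> (if hit M then {M} else {})"
    by (auto simp: less_Suc_eq)
  then have "card {j. j < Suc M \<and> hit j} = card {j. j < M \<and> hit j} + (if hit M then 1 else 0)"
    by (auto simp: card_insert_if)
  also have "card {j. j < M \<and> hit j} = card {k. k < H \<and> k mod n = y}"
    using Suc unfolding hit_def H_def by simp
  also have "(if hit M then 1 else 0) = card {k. H \<le> k \<and> k < H + d M \<and> k mod n = y}"
    using card_interval_mod_eq[OF assms(1) Suc.prems[of M]] unfolding hit_def H_def by simp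
  also have "card {k. k < H \<and> k mod n = y} + \<dots> = card {k. k < H + d M \<and> k mod n = y}"
    by (subst card_Un_disjoint[symmetric]) (auto intro: arg_cong[where f = card])
  finally show ?case
    unfolding hit_def H_def by simp
qed

section \<open>Balanced allocation\<close>

lemma div_add_indicator_between_floor_ceiling:
  fixes N n y :: nat
  assumes "0 < n"
  shows "\<lfloor>real N / real n\<rfloor> \<le> int (N div n + (if y < N mod n then 1 else 0)) \<and>
         int (N div n + (if y < N mod n then 1 else 0)) \<le> \<lceil>real N / real n\<rceil>"
proof -
  have floor: "\<lfloor>real N / real n\<rfloor> = int (N div n)"
    by (rule floor_divide_of_nat_eq)
  then have "real (N div n) \<le> real N / real n"
    by (metis of_int_floor_le of_int_of_nat_eq)
  moreover have "real (N div n) < real N / real n" if "0 < N mod n"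
  proof -
    have "real n * real (N div n) < real N"
      using that div_mult_mod_eq[of N n] by (metis of_nat_add of_nat_less_iff of_nat_mult less_add_same_cancel1 mult.commute)
    then show ?thesis
      using assms by (simp add: field_simps)
  qed
  ultimately have "int (N div n + (if y < N mod n then 1 else 0)) \<le> \<lceil>real N / real n\<rceil>"
    by (auto simp: le_ceiling_iff)
  then show ?thesis
    by (simp add: floor)
qed

lemma sum_choose_atLeast1: "(\<Sum>s\<in>{1..n}. n choose s) = 2 ^ n - 1"
proof -
  have "{..n} = insert 0 {1..n}"
    by auto
  then show ?thesis
    using choose_row_sum[of n] by simp
qed

lemma n_card_Aset_add_Hval:
  assumes "distinct L" "set L = (\<Union>s\<in>{1..n}. Pset n s)"
  shows "n * card (\<Union>s\<in>{1..n}. Aset n s) + Hval n L (length L) = 2 ^ n - 1"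
proof -
  have fin: "finite (Aset n s)" "finite (Pset n s)" if "s \<in> {1..n}" for s
    using finite_Eset[of s n] that unfolding Aset_def Pset_def by auto
  have "card (\<Union>s\<in>{1..n}. Aset n s) = (\<Sum>s\<in>{1..n}. card (Aset n s))"
    using fin Aset_disjoint by (intro card_UN_disjoint) auto
  moreover have "Hval n L (length L) = sum (dval n) (set L)"
    unfolding Hval_def using sum_list_distinct_conv_sum_set[OF assms(1), of "dval n"]
    by (simp add: sum_list_sum_nth atLeast0LessThan)
  moreover have "\<dots> = (\<Sum>s\<in>{1..n}. \<Sum>t\<in>Pset n s. dval n t)"
    unfolding assms(2) using fin Pset_disjoint by (intro sum.UNION_disjoint) auto
  ultimately have "n * card (\<Union>s\<in>{1..n}. Aset n s) + Hval n L (length L)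
      = (\<Sum>s\<in>{1..n}. n * card (Aset n s) + (\<Sum>t\<in>Pset n s. dval n t))"
    by (simp add: sum.distrib sum_distrib_left)
  also have "\<dots> = (\<Sum>s\<in>{1..n}. n choose s)"
    by (intro sum.cong refl n_card_Aset_add_sum_dval_Pset) auto
  finally show ?thesis
    unfolding sum_choose_atLeast1 .
qed

lemma card_designated:
  assumes "x \<in> {1..n}" "set L = (\<Union>s\<in>{1..n}. Pset n s)"
  shows "card {j. j < length L \<and> designated n L x j} =
    Hval n L (length L) div n + (if x - 1 < Hval n L (length L) mod n then 1 else 0)"
proof -
  have d_le: "dval n (L ! j) \<le> n" if j: "j < length L" for j
  proof -
    obtain s where "L ! j \<in> Pset n s"
      using nth_mem[OF j] assms(2) by auto
    then show ?thesis
      by (intro dval_le is_IA_nonempty Pset_IA)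
  qed
  have "designated n L x j \<longleftrightarrow>
      (int (x - 1) - int (\<Sum>i<j. dval n (L ! i))) mod int n < int (dval n (L ! j))" for j
    using assms(1) unfolding designated_def Hval_def by (simp add: of_nat_diff)
  then have "card {j. j < length L \<and> designated n L x j} =
      card {j. j < length L \<and> (int (x - 1) - int (\<Sum>i<j. dval n (L ! i))) mod int n < int (dval n (L ! j))}"
    by simp
  also have "\<dots> = card {k. k < Hval n L (length L) \<and> k mod n = x - 1}"
    unfolding Hval_def using assms(1) d_le by (intro card_designated_eq_card_mod) auto
  also have "\<dots> = Hval n L (length L) div n + (if x - 1 < Hval n L (length L) mod n then 1 else 0)"
    using assms(1) by (intro card_mod_eq_less) auto
  finally show ?thesis .
qed

lemma card_CV:
  assumes "x \<in> {1..n}" "distinct L" "set L = (\<Union>s\<in>{1..n}. Pset n s)"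
  shows "card (CV n L x) = card (\<Union>s\<in>{1..n}. Aset n s) + card {j. j < length L \<and> designated n L x j}"
proof -
  define A J where "A = (\<Union>s\<in>{1..n}. Aset n s)" and "J = {j. j < length L \<and> designated n L x j}"
  have L_J: "(!) L ` J \<subseteq> set L"
    unfolding J_def by auto
  have A: "\<exists>s. is_IA n s t \<and> period t = length t" if "t \<in> A" for t
    using that Aset_IA Aset_period unfolding A_def by blast
  have L: "\<exists>s. is_IA n s t \<and> period t < length t" if "t \<in> set L" for t
    using that Pset_IA Pset_period unfolding assms(3) by blast
  have inj: "inj_on (coalition n x) (A \<union> set L)"
  proof (rule inj_onI)
    fix t t'
    assume "t \<in> A \<union> set L" "t' \<in> A \<union> set L"
    then obtain s s' where "is_IA n s t" "is_IA n s' t'"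
      by (metis A L Un_iff)
    then show "coalition n x t = coalition n x t' \<Longrightarrow> t = t'"
      by (rule coalition_inj[OF assms(1)])
  qed
  have "CV n L x = coalition n x ` (A \<union> (!) L ` J)"
    unfolding CV_def A_def J_def by auto
  moreover have "inj_on (coalition n x) (A \<union> (!) L ` J)"
    using inj_on_subset[OF inj] L_J by blast
  moreover have "A \<inter> (!) L ` J = {}"
    using A L L_J by fastforce
  moreover have "finite A" "finite J"
    using finite_Eset unfolding A_def J_def Aset_def by auto
  moreover have "card ((!) L ` J) = card J"
    using inj_on_nth[OF assms(2), of J] unfolding J_def by (simp add: card_image)
  ultimately show ?thesis
    unfolding A_def[symmetric] J_def[symmetric] by (simp add: card_image card_Un_disjoint)
qed

theorem theorem10:
  fixes n :: nat and L :: "nat list list"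
  assumes "n \<ge> 1"
    and "distinct L"
    and "set L = (\<Union>s\<in>{1..n}. Pset n s)"
  shows "\<forall>x\<in>{1..n}.
           \<lfloor>(2 ^ n - 1) / real n\<rfloor> \<le> int (card (CV n L x)) \<and>
           int (card (CV n L x)) \<le> \<lceil>(2 ^ n - 1) / real n\<rceil>"
proof
  fix x
  assume x: "x \<in> {1..n}"
  define N :: nat where "N = 2 ^ n - 1"
  have N: "N = n * card (\<Union>s\<in>{1..n}. Aset n s) + Hval n L (length L)"
    using n_card_Aset_add_Hval[OF assms(2,3)] unfolding N_def by simp
  have "card (CV n L x) = N div n + (if x - 1 < N mod n then 1 else 0)"
    using card_CV[OF x assms(2,3)] card_designated[OF x assms(3)] assms(1) unfolding N by simp
  moreover have "real N = 2 ^ n - 1"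
    unfolding N_def by (simp add: of_nat_diff)
  ultimately show "\<lfloor>(2 ^ n - 1) / real n\<rfloor> \<le> int (card (CV n L x)) \<and>
      int (card (CV n L x)) \<le> \<lceil>(2 ^ n - 1) / real n\<rceil>"
    using div_add_indicator_between_floor_ceiling[of n N "x - 1"] assms(1) by simp
qed

end
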